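(* Let $A,B\in M_n(\mathbb{R}_+)$ be nilpotent such that both $A$ and $B$ annihilate $AB$ and $BA$, i.e. $A(AB)=A(BA)=B(AB)=B(BA)=0$. Then $A$ and $B$ are simultaneously triangularizable.
   Context: Max algebra: $\mathbb{R}_+$ the nonnegative reals with $a\oplus b=\max\{a,b\}$ and ordinary multiplication; for $A,B\in M_n(\mathbb{R}_+)$, $(AB)_{ij}=\max_k a_{ik}b_{kj}$. A matrix is nilpotent if some power (max-product) is $0$. $GL_n(\mathbb{R}_+)$ is the set of matrices invertible under this product (the generalized permutation matrices). $A,B$ are simultaneously triangularizable if there is one $P\in GL_n(\mathbb{R}_+)$ with both $P^{-1}AP$ and $P^{-1}BP$ upper triangular. *)

theory Defs
  imports Main "HOL.Real"
begin

text \<open>n x n matrices over the max algebra R_+, represented as functions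
  nat => nat => real which are nonnegative and vanish outside the index
  range {0..<n}.\<close>

definition mp_mats :: "nat \<Rightarrow> (nat \<Rightarrow> nat \<Rightarrow> real) set" where
  "mp_mats n = {A. (\<forall>i j. 0 \<le> A i j) \<and> (\<forall>i j. (n \<le> i \<or> n \<le> j) \<longrightarrow> A i j = 0)}"

text \<open>Max-product: (AB)_ij = max_k a_ik b_kj (k < n); the 0 inside the Max is
  harmless for nonnegative entries and makes the set nonempty.\<close>
definition mp_mult :: "nat \<Rightarrow> (nat \<Rightarrow> nat \<Rightarrow> real) \<Rightarrow> (nat \<Rightarrow> nat \<Rightarrow> real) \<Rightarrow> (nat \<Rightarrow> nat \<Rightarrow> real)" where
  "mp_mult n A B = (\<lambda>i j. if i < n \<and> j < n
      then Max (insert 0 ((\<lambda>k. A i k * B k j) ` {..<n})) else 0)"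

definition mp_zero :: "nat \<Rightarrow> nat \<Rightarrow> real" where
  "mp_zero = (\<lambda>i j. 0)"

definition mp_one :: "nat \<Rightarrow> nat \<Rightarrow> nat \<Rightarrow> real" where
  "mp_one n = (\<lambda>i j. if i = j \<and> i < n then 1 else 0)"

fun mp_pow :: "nat \<Rightarrow> (nat \<Rightarrow> nat \<Rightarrow> real) \<Rightarrow> nat \<Rightarrow> (nat \<Rightarrow> nat \<Rightarrow> real)" where
  "mp_pow n A 0 = mp_one n"
| "mp_pow n A (Suc k) = mp_mult n A (mp_pow n A k)"

definition mp_nilpotent :: "nat \<Rightarrow> (nat \<Rightarrow> nat \<Rightarrow> real) \<Rightarrow> bool" where
  "mp_nilpotent n A \<longleftrightarrow> (\<exists>k. mp_pow n A k = mp_zero)"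

definition mp_inverse :: "nat \<Rightarrow> (nat \<Rightarrow> nat \<Rightarrow> real) \<Rightarrow> (nat \<Rightarrow> nat \<Rightarrow> real) \<Rightarrow> bool" where
  "mp_inverse n P Q \<longleftrightarrow> P \<in> mp_mats n \<and> Q \<in> mp_mats n \<and>
     mp_mult n P Q = mp_one n \<and> mp_mult n Q P = mp_one n"

definition upper_triangular :: "(nat \<Rightarrow> nat \<Rightarrow> real) \<Rightarrow> bool" where
  "upper_triangular M \<longleftrightarrow> (\<forall>i j. j < i \<longrightarrow> M i j = 0)"

definition mp_simul_triangularizable :: "nat \<Rightarrow> (nat \<Rightarrow> nat \<Rightarrow> real) \<Rightarrow> (nat \<Rightarrow> nat \<Rightarrow> real) \<Rightarrow> bool" where
  "mp_simul_triangularizable n A B \<longleftrightarrow>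
     (\<exists>P Q. mp_inverse n P Q \<and>
        upper_triangular (mp_mult n Q (mp_mult n A P)) \<and>
        upper_triangular (mp_mult n Q (mp_mult n B P)))"

end

theory Submission
  imports Defs
begin

text \<open>Over the max algebra the support of a product is the relational composition of the
  supports. Hence nilpotency makes the support graphs of \<open>A\<close> and \<open>B\<close> acyclic, and the
  hypotheses say that there is no walk of the form \<open>(A|B) A B\<close> or \<open>(A|B) B A\<close>.
  A cycle in the union of the two graphs uses both kinds of edges, so it changes kind somewhere;
  together with the edge preceding that change it forms such a forbidden walk. So the union is
  acyclic, and numbering the indices along a topological order of it gives a permutation matrix
  that conjugates both \<open>A\<close> and \<open>B\<close> to upper triangular form.\<close>

lemma acyclic_if_relpow_empty:
  assumes "R ^^ N = {}"
  shows "acyclic R"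
  unfolding acyclic_def
proof (intro allI notI)
  fix i assume "(i, i) \<in> R\<^sup>+"
  then obtain m where "0 < m" and cycle: "(i, i) \<in> R ^^ m"
    using trancl_power by blast
  have iterated: "(i, i) \<in> R ^^ (m * t)" for t
  proof (induction t)
    case 0
    show ?case by (simp add: relpow_0_I)
  next
    case (Suc t)
    show ?case using relpow_trans[OF cycle Suc.IH] by simp
  qed
  have "R ^^ (m * N) = R ^^ (m * N - N) O R ^^ N"
    using \<open>0 < m\<close> by (simp flip: relpow_add)
  with assms iterated[of N] show False by simp
qed

lemma relcomp_trancl_relcomp_eq_empty:
  assumes "Y \<subseteq> Z" and "Z O Y O X = {}"
  shows "Z O Y\<^sup>+ O X = {}"
proof -
  have False if "(p, y) \<in> Z" "(y, z) \<in> Y\<^sup>+" "(z, t) \<in> X" for p y z t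
  proof -
    obtain c where "(y, c) \<in> Y\<^sup>*" "(c, z) \<in> Y"
      using tranclD2[OF \<open>(y, z) \<in> Y\<^sup>+\<close>] by blast
    have "\<exists>d. (d, c) \<in> Z"
      using \<open>(y, c) \<in> Y\<^sup>*\<close> \<open>(p, y) \<in> Z\<close> assms(1) by (cases rule: rtranclE) auto
    with \<open>(c, z) \<in> Y\<close> \<open>(z, t) \<in> X\<close> assms(2) show False by blast
  qed
  then show ?thesis by blast
qed

lemma trancl_Un_step:
  assumes no_switch: "(X \<union> Y) O Y\<^sup>+ O X = {}"
    and "(x, y) \<in> X\<^sup>= O Y\<^sup>+" and "(y, z) \<in> X \<union> Y"
  shows "(x, z) \<in> X\<^sup>= O Y\<^sup>+ \<union> Y\<^sup>= O X\<^sup>+"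
proof -
  obtain c where xc: "(x, c) \<in> X\<^sup>=" and cy: "(c, y) \<in> Y\<^sup>+"
    using assms(2) by blast
  show ?thesis
  proof (cases "(y, z) \<in> Y")
    case True
    then show ?thesis using xc cy by (blast intro: trancl_into_trancl)
  next
    case False
    with assms(3) have yz: "(y, z) \<in> X" by blast
    \<comment> \<open>an \<open>X\<close>-step from \<open>x\<close> to \<open>c\<close> would start a forbidden walk \<open>X Y\<^sup>+ X\<close>\<close>
    have "x = c"
      using xc cy yz no_switch by blast
    from cy \<open>x = c\<close> consider "(x, y) \<in> Y" | d where "(x, d) \<in> Y" "(d, y) \<in> Y\<^sup>+"
      by (blast elim: converse_tranclE)
    then show ?thesis
    proof cases
      case 1
      then show ?thesis using yz by blast
    next
      case 2
      then show ?thesis using yz no_switch by blast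
    qed
  qed
qed

lemma trancl_Un_subset:
  assumes "(X \<union> Y) O Y\<^sup>+ O X = {}" and "(X \<union> Y) O X\<^sup>+ O Y = {}"
  shows "(X \<union> Y)\<^sup>+ \<subseteq> X\<^sup>= O Y\<^sup>+ \<union> Y\<^sup>= O X\<^sup>+"
proof (rule subrelI)
  have swapped: "(Y \<union> X) O X\<^sup>+ O Y = {}"
    using assms(2) by (simp only: Un_commute)
  fix x z assume "(x, z) \<in> (X \<union> Y)\<^sup>+"
  then show "(x, z) \<in> X\<^sup>= O Y\<^sup>+ \<union> Y\<^sup>= O X\<^sup>+"
  proof (induction rule: trancl_induct)
    case (base z)
    then show ?case by (blast intro: r_into_trancl)
  next
    case (step y z)
    from step.IH show ?case
    proof
      assume "(x, y) \<in> X\<^sup>= O Y\<^sup>+"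
      from trancl_Un_step[OF assms(1) this step.hyps(2)] show ?case .
    next
      assume "(x, y) \<in> Y\<^sup>= O X\<^sup>+"
      moreover have "(y, z) \<in> Y \<union> X" using step.hyps(2) by blast
      ultimately show ?case using trancl_Un_step[OF swapped] by blast
    qed
  qed
qed

lemma reflcl_relcomp_trancl_irrefl:
  assumes "acyclic Y" and "(X \<union> Y) O Y\<^sup>+ O X = {}"
  shows "(i, i) \<notin> X\<^sup>= O Y\<^sup>+"
proof
  assume "(i, i) \<in> X\<^sup>= O Y\<^sup>+"
  then obtain c where "(i, c) \<in> X\<^sup>=" and "(c, i) \<in> Y\<^sup>+" by blast
  then show False using assms by (auto simp: acyclic_def)
qed

lemma acyclic_Un:
  assumes "acyclic X" and "acyclic Y"
    and "(X \<union> Y) O X O Y = {}" and "(X \<union> Y) O Y O X = {}"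
  shows "acyclic (X \<union> Y)"
proof -
  have YX: "(X \<union> Y) O Y\<^sup>+ O X = {}"
    by (rule relcomp_trancl_relcomp_eq_empty) (use assms(4) in auto)
  have XY: "(X \<union> Y) O X\<^sup>+ O Y = {}"
    by (rule relcomp_trancl_relcomp_eq_empty) (use assms(3) in auto)
  have "(Y \<union> X) O X\<^sup>+ O Y = {}"
    using XY by (simp only: Un_commute)
  note irrefl = reflcl_relcomp_trancl_irrefl[OF assms(2) YX]
    reflcl_relcomp_trancl_irrefl[OF assms(1) this]
  show ?thesis
    unfolding acyclic_def
  proof (intro allI notI)
    fix i assume "(i, i) \<in> (X \<union> Y)\<^sup>+"
    with trancl_Un_subset[OF YX XY] have "(i, i) \<in> X\<^sup>= O Y\<^sup>+ \<union> Y\<^sup>= O X\<^sup>+"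
      by (rule subsetD)
    with irrefl show False by blast
  qed
qed

lemma acyclic_topological_numbering:
  assumes "finite S" and "acyclic R" and "R \<subseteq> S \<times> S"
  shows "\<exists>r. bij_betw r S {..<card S} \<and> (\<forall>(u, v) \<in> R. r u < r v)"
  using assms
proof (induction S arbitrary: R rule: finite_psubset_induct)
  case (psubset S)
  show ?case
  proof (cases "S = {}")
    case True
    then show ?thesis using psubset.prems by (simp add: bij_betw_def)
  next
    case False
    have "finite R"
      using psubset.hyps psubset.prems(2) by (meson finite_SigmaI finite_subset)
    then have "wf (R\<inverse>)"
      using psubset.prems(1) by (rule finite_acyclic_wf_converse)
    then obtain m where "m \<in> S" and sink: "\<And>v. (v, m) \<in> R\<inverse> \<Longrightarrow> v \<notin> S"
      using False wfE_min by (metis ex_in_conv)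
    define S' where "S' = S - {m}"
    define R' where "R' = R \<inter> S' \<times> S'"
    have "S' \<subset> S" using \<open>m \<in> S\<close> S'_def by blast
    moreover have "acyclic R'" using psubset.prems(1) R'_def acyclic_subset by blast
    ultimately obtain r' where r': "bij_betw r' S' {..<card S'}" "\<forall>(u, v) \<in> R'. r' u < r' v"
      using psubset.IH[of S' R'] R'_def by blast
    define r where "r = r'(m := card S')"
    have "bij_betw r S' {..<card S'}"
      using r'(1) by (rule bij_betw_cong[THEN iffD1, rotated]) (simp add: r_def S'_def)
    then have "bij_betw r (S' \<union> {m}) ({..<card S'} \<union> {r m})"
      by (rule notIn_Un_bij_betw3[THEN iffD1, rotated -1]) (auto simp: r_def S'_def)
    moreover have "card S = Suc (card S')"
      using card_Suc_Diff1[OF psubset.hyps \<open>m \<in> S\<close>] by (simp only: S'_def)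
    then have "{..<card S'} \<union> {r m} = {..<card S}"
      by (auto simp: r_def)
    moreover have "S' \<union> {m} = S"
      using \<open>m \<in> S\<close> by (auto simp: S'_def)
    moreover have "r u < r v" if "(u, v) \<in> R" for u v
    proof -
      have "u \<in> S" "v \<in> S" "u \<noteq> m"
        using that psubset.prems(2) sink by auto
      show ?thesis
      proof (cases "v = m")
        case True
        have "r' u \<in> {..<card S'}"
          using r'(1) \<open>u \<in> S\<close> \<open>u \<noteq> m\<close> by (auto simp: S'_def bij_betw_def)
        then show ?thesis using True \<open>u \<noteq> m\<close> by (simp add: r_def)
      next
        case False
        then have "(u, v) \<in> R'"
          using that \<open>u \<in> S\<close> \<open>v \<in> S\<close> \<open>u \<noteq> m\<close> by (auto simp: R'_def S'_def)
        then show ?thesis using r'(2) \<open>u \<noteq> m\<close> False by (auto simp: r_def)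
      qed
    qed
    ultimately show ?thesis by auto
  qed
qed

lemma mp_mult_nonneg: "0 \<le> mp_mult n X Y i j"
  unfolding mp_mult_def by (simp add: Max_ge_iff)

lemma mp_mult_eq_Max:
  "i < n \<Longrightarrow> j < n \<Longrightarrow> mp_mult n X Y i j = Max (insert 0 ((\<lambda>k. X i k * Y k j) ` {..<n}))"
  by (simp add: mp_mult_def)

lemma mp_mult_in_mp_mats: "mp_mult n X Y \<in> mp_mats n"
  unfolding mp_mats_def by (auto simp: mp_mult_nonneg) (auto simp: mp_mult_def)

lemma mp_one_in_mp_mats: "mp_one n \<in> mp_mats n"
  by (auto simp: mp_mats_def mp_one_def)

lemma mp_pow_in_mp_mats: "mp_pow n X k \<in> mp_mats n"
  by (cases k) (simp_all add: mp_one_in_mp_mats mp_mult_in_mp_mats)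

lemma mp_mats_support:
  assumes "X \<in> mp_mats n" and "0 < X i j"
  shows "i < n \<and> j < n"
proof (rule ccontr)
  assume "\<not> (i < n \<and> j < n)"
  then have "X i j = 0"
    using assms(1) by (auto simp: mp_mats_def not_less)
  with assms(2) show False by simp
qed

definition mp_graph :: "(nat \<Rightarrow> nat \<Rightarrow> real) \<Rightarrow> nat rel" where
  "mp_graph X = {(i, j). 0 < X i j}"

lemma mp_graph_subset: "X \<in> mp_mats n \<Longrightarrow> mp_graph X \<subseteq> {..<n} \<times> {..<n}"
  unfolding mp_graph_def using mp_mats_support by blast

lemma mp_graph_eq_empty_iff: "X \<in> mp_mats n \<Longrightarrow> mp_graph X = {} \<longleftrightarrow> X = mp_zero"
  unfolding mp_graph_def mp_mats_def mp_zero_def by (force simp: fun_eq_iff order.order_iff_strict)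

lemma mp_graph_mp_mult:
  assumes "X \<in> mp_mats n" and "Y \<in> mp_mats n"
  shows "mp_graph (mp_mult n X Y) = mp_graph X O mp_graph Y"
proof -
  have pos_iff: "0 < X i k * Y k j \<longleftrightarrow> 0 < X i k \<and> 0 < Y k j" for i k j
  proof -
    have "0 \<le> X i k" and "0 \<le> Y k j"
      using assms by (simp_all add: mp_mats_def)
    then show ?thesis by (auto simp: zero_less_mult_iff)
  qed
  have "0 < mp_mult n X Y i j \<longleftrightarrow> (\<exists>k. 0 < X i k \<and> 0 < Y k j)" for i j
  proof (cases "i < n \<and> j < n")
    case True
    then have "0 < mp_mult n X Y i j \<longleftrightarrow> (\<exists>k\<in>{..<n}. 0 < X i k * Y k j)"
      by (simp add: mp_mult_eq_Max Max_gr_iff)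
    also have "\<dots> \<longleftrightarrow> (\<exists>k. 0 < X i k \<and> 0 < Y k j)"
      using pos_iff mp_mats_support[OF assms(1)] by blast
    finally show ?thesis .
  next
    case False
    then show ?thesis
      using mp_mats_support[OF assms(1)] mp_mats_support[OF assms(2)] by (auto simp: mp_mult_def)
  qed
  then show ?thesis
    by (auto simp: mp_graph_def)
qed

lemma mp_mult3_eq_zero_iff:
  assumes "X \<in> mp_mats n" and "Y \<in> mp_mats n" and "Z \<in> mp_mats n"
  shows "mp_mult n X (mp_mult n Y Z) = mp_zero \<longleftrightarrow> mp_graph X O mp_graph Y O mp_graph Z = {}"
proof -
  have "mp_mult n X (mp_mult n Y Z) = mp_zero \<longleftrightarrow> mp_graph (mp_mult n X (mp_mult n Y Z)) = {}"
    by (rule mp_graph_eq_empty_iff[symmetric]) (rule mp_mult_in_mp_mats)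
  then show ?thesis
    using assms by (simp add: mp_graph_mp_mult mp_mult_in_mp_mats)
qed

lemma mp_graph_mp_pow_Suc:
  assumes "X \<in> mp_mats n"
  shows "mp_graph (mp_pow n X (Suc k)) = mp_graph X ^^ Suc k"
proof (induction k)
  case 0
  have "mp_graph (mp_one n) = Id_on {..<n}"
    by (auto simp: mp_graph_def mp_one_def Id_on_def)
  then show ?case
    using mp_graph_subset[OF assms] by (auto simp: mp_graph_mp_mult[OF assms mp_one_in_mp_mats])
next
  case (Suc k)
  have "mp_graph (mp_pow n X (Suc (Suc k))) = mp_graph X O mp_graph (mp_pow n X (Suc k))"
    by (subst mp_pow.simps(2)) (rule mp_graph_mp_mult[OF assms mp_pow_in_mp_mats])
  also have "\<dots> = mp_graph X ^^ Suc (Suc k)"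
    by (metis Suc.IH relpow.simps(2) relpow_commute)
  finally show ?case .
qed

lemma mp_nilpotent_acyclic:
  assumes "X \<in> mp_mats n" and "mp_nilpotent n X"
  shows "acyclic (mp_graph X)"
proof -
  obtain k where "mp_pow n X k = mp_zero"
    using assms(2) by (auto simp: mp_nilpotent_def)
  then have "mp_graph (mp_pow n X k) = {}"
    by (simp add: mp_graph_def mp_zero_def)
  then have "mp_graph X ^^ Suc k = {}"
    by (simp only: mp_graph_mp_pow_Suc[OF assms(1), symmetric] mp_pow.simps(2)
        mp_graph_mp_mult[OF assms(1) mp_pow_in_mp_mats] relcomp_empty2)
  then show ?thesis
    by (rule acyclic_if_relpow_empty)
qed

definition mp_perm_mat :: "nat \<Rightarrow> (nat \<Rightarrow> nat) \<Rightarrow> nat \<Rightarrow> nat \<Rightarrow> real" where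
  "mp_perm_mat n \<sigma> = (\<lambda>i j. if i < n \<and> j < n \<and> \<sigma> i = j then 1 else 0)"

lemma mp_perm_mat_in_mp_mats: "mp_perm_mat n \<sigma> \<in> mp_mats n"
  by (auto simp: mp_mats_def mp_perm_mat_def)

lemma Max_insert_zero_image_eq:
  fixes f :: "nat \<Rightarrow> real"
  assumes "c < n" and "0 \<le> f c" and "\<And>k. k < n \<Longrightarrow> k \<noteq> c \<Longrightarrow> f k = 0"
  shows "Max (insert 0 (f ` {..<n})) = f c"
proof -
  have "f k \<le> f c" if "k < n" for k
    using assms that by (cases "k = c") auto
  then show ?thesis
    using assms(1,2) by (intro Max_eqI) auto
qed

lemma mp_mult_perm_mat_left:
  assumes "M \<in> mp_mats n" and "i < n" and "j < n" and "\<sigma> i < n"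
  shows "mp_mult n (mp_perm_mat n \<sigma>) M i j = M (\<sigma> i) j"
proof -
  have "mp_mult n (mp_perm_mat n \<sigma>) M i j = Max (insert 0 ((\<lambda>k. mp_perm_mat n \<sigma> i k * M k j) ` {..<n}))"
    using assms(2,3) by (rule mp_mult_eq_Max)
  also have "\<dots> = mp_perm_mat n \<sigma> i (\<sigma> i) * M (\<sigma> i) j"
    using assms by (intro Max_insert_zero_image_eq) (auto simp: mp_perm_mat_def mp_mats_def)
  finally show ?thesis
    using assms(2,4) by (simp add: mp_perm_mat_def)
qed

lemma mp_mult_perm_mat_right:
  assumes "M \<in> mp_mats n" and "i < n" and "j < n" and \<sigma>: "bij_betw \<sigma> {..<n} {..<n}"
  shows "mp_mult n M (mp_perm_mat n \<sigma>) i j = M i (inv_into {..<n} \<sigma> j)"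
proof -
  let ?k = "inv_into {..<n} \<sigma> j"
  have "?k < n"
    using bij_betw_apply[OF bij_betw_inv_into[OF \<sigma>]] assms(3) by simp
  have "\<sigma> ?k = j"
    using bij_betw_inv_into_right[OF \<sigma>] assms(3) by simp
  have "\<sigma> k \<noteq> j" if "k < n" and "k \<noteq> ?k" for k
  proof
    assume "\<sigma> k = j"
    then have "?k = k"
      using bij_betw_inv_into_left[OF \<sigma>] \<open>k < n\<close> by auto
    with \<open>k \<noteq> ?k\<close> show False by simp
  qed
  have "mp_mult n M (mp_perm_mat n \<sigma>) i j = Max (insert 0 ((\<lambda>k. M i k * mp_perm_mat n \<sigma> k j) ` {..<n}))"
    using assms(2,3) by (rule mp_mult_eq_Max)
  also have "\<dots> = M i ?k * mp_perm_mat n \<sigma> ?k j"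
    using assms(1,3) \<open>?k < n\<close> \<open>\<And>k. k < n \<Longrightarrow> k \<noteq> ?k \<Longrightarrow> \<sigma> k \<noteq> j\<close>
    by (intro Max_insert_zero_image_eq) (auto simp: mp_perm_mat_def mp_mats_def)
  finally show ?thesis
    using assms(3) \<open>?k < n\<close> \<open>\<sigma> ?k = j\<close> by (simp add: mp_perm_mat_def)
qed

lemma mp_mult_perm_mat_inverse:
  assumes \<sigma>: "bij_betw \<sigma> {..<n} {..<n}" and "\<And>i. i < n \<Longrightarrow> \<tau> (\<sigma> i) = i"
  shows "mp_mult n (mp_perm_mat n \<sigma>) (mp_perm_mat n \<tau>) = mp_one n"
proof (intro ext)
  fix i j
  show "mp_mult n (mp_perm_mat n \<sigma>) (mp_perm_mat n \<tau>) i j = mp_one n i j"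
  proof (cases "i < n \<and> j < n")
    case True
    then have "mp_mult n (mp_perm_mat n \<sigma>) (mp_perm_mat n \<tau>) i j = mp_perm_mat n \<tau> (\<sigma> i) j"
      using bij_betw_apply[OF \<sigma>] by (simp add: mp_mult_perm_mat_left mp_perm_mat_in_mp_mats)
    also have "\<dots> = mp_one n i j"
      using True bij_betw_apply[OF \<sigma>] assms(2) by (auto simp: mp_perm_mat_def mp_one_def)
    finally show ?thesis .
  next
    case False
    then show ?thesis by (auto simp: mp_mult_def mp_one_def)
  qed
qed

lemma mp_inverse_perm_mat:
  assumes \<sigma>: "bij_betw \<sigma> {..<n} {..<n}"
  shows "mp_inverse n (mp_perm_mat n \<sigma>) (mp_perm_mat n (inv_into {..<n} \<sigma>))"
  unfolding mp_inverse_def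
  using mp_mult_perm_mat_inverse[OF \<sigma>] bij_betw_inv_into_left[OF \<sigma>]
    mp_mult_perm_mat_inverse[OF bij_betw_inv_into[OF \<sigma>]] bij_betw_inv_into_right[OF \<sigma>]
  by (simp add: mp_perm_mat_in_mp_mats)

lemma upper_triangular_perm_mat_conj:
  assumes r: "bij_betw r {..<n} {..<n}" and "M \<in> mp_mats n"
    and increasing: "\<forall>(u, v) \<in> mp_graph M. r u < r v"
  shows "upper_triangular
    (mp_mult n (mp_perm_mat n (inv_into {..<n} r)) (mp_mult n M (mp_perm_mat n r)))"
  unfolding upper_triangular_def
proof (intro allI impI)
  fix i j :: nat assume "j < i"
  let ?s = "inv_into {..<n} r"
  show "mp_mult n (mp_perm_mat n ?s) (mp_mult n M (mp_perm_mat n r)) i j = 0"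
  proof (cases "i < n")
    case False
    then show ?thesis by (simp add: mp_mult_def)
  next
    case True
    with \<open>j < i\<close> have "j < n" by simp
    have s: "?s i < n" "r (?s i) = i" "r (?s j) = j"
      using bij_betw_apply[OF bij_betw_inv_into[OF r]] bij_betw_inv_into_right[OF r]
        True \<open>j < n\<close> by auto
    have "mp_mult n (mp_perm_mat n ?s) (mp_mult n M (mp_perm_mat n r)) i j = M (?s i) (?s j)"
      using True \<open>j < n\<close> s(1) assms(2) r
      by (simp add: mp_mult_perm_mat_left mp_mult_perm_mat_right mp_mult_in_mp_mats)
    moreover have "\<not> 0 < M (?s i) (?s j)"
    proof
      assume "0 < M (?s i) (?s j)"
      then have "r (?s i) < r (?s j)"
        using increasing by (auto simp: mp_graph_def)
      with s \<open>j < i\<close> show False by simp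
    qed
    moreover have "0 \<le> M (?s i) (?s j)"
      using assms(2) by (simp add: mp_mats_def)
    ultimately show ?thesis by simp
  qed
qed

lemma mp_simul_triangularizable_if_increasing:
  assumes "A \<in> mp_mats n" and "B \<in> mp_mats n" and "bij_betw r {..<n} {..<n}"
    and "\<forall>(u, v) \<in> mp_graph A \<union> mp_graph B. r u < r v"
  shows "mp_simul_triangularizable n A B"
  unfolding mp_simul_triangularizable_def
proof (intro exI conjI)
  show "mp_inverse n (mp_perm_mat n r) (mp_perm_mat n (inv_into {..<n} r))"
    using assms(3) by (rule mp_inverse_perm_mat)
  show "upper_triangular
      (mp_mult n (mp_perm_mat n (inv_into {..<n} r)) (mp_mult n A (mp_perm_mat n r)))"
    using assms(3,1) by (rule upper_triangular_perm_mat_conj) (use assms(4) in blast)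
  show "upper_triangular
      (mp_mult n (mp_perm_mat n (inv_into {..<n} r)) (mp_mult n B (mp_perm_mat n r)))"
    using assms(3,2) by (rule upper_triangular_perm_mat_conj) (use assms(4) in blast)
qed

theorem corollary3p10:
  fixes n :: nat and A B :: "nat \<Rightarrow> nat \<Rightarrow> real"
  assumes "A \<in> mp_mats n" and "B \<in> mp_mats n"
    and "mp_nilpotent n A" and "mp_nilpotent n B"
    and "mp_mult n A (mp_mult n A B) = mp_zero"
    and "mp_mult n A (mp_mult n B A) = mp_zero"
    and "mp_mult n B (mp_mult n A B) = mp_zero"
    and "mp_mult n B (mp_mult n B A) = mp_zero"
  shows "mp_simul_triangularizable n A B"
proof -
  have "acyclic (mp_graph A \<union> mp_graph B)"
  proof (rule acyclic_Un)
    show "acyclic (mp_graph A)" "acyclic (mp_graph B)"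
      using assms(1-4) by (simp_all add: mp_nilpotent_acyclic)
    show "(mp_graph A \<union> mp_graph B) O mp_graph A O mp_graph B = {}"
      using assms(1,2,5,7) by (simp add: mp_mult3_eq_zero_iff)
    show "(mp_graph A \<union> mp_graph B) O mp_graph B O mp_graph A = {}"
      using assms(1,2,6,8) by (simp add: mp_mult3_eq_zero_iff)
  qed
  moreover have "mp_graph A \<union> mp_graph B \<subseteq> {..<n} \<times> {..<n}"
    using assms(1,2) by (simp add: mp_graph_subset)
  ultimately have "\<exists>r. bij_betw r {..<n} {..<n} \<and> (\<forall>(u, v) \<in> mp_graph A \<union> mp_graph B. r u < r v)"
    using acyclic_topological_numbering[of "{..<n}" "mp_graph A \<union> mp_graph B"] by simp
  then obtain r where "bij_betw r {..<n} {..<n}"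
    and "\<forall>(u, v) \<in> mp_graph A \<union> mp_graph B. r u < r v"
    by blast
  then show ?thesis
    using assms(1,2) by (rule mp_simul_triangularizable_if_increasing[rotated 2])
qed

end
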